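(* Let $S$ be an inverse semigroup, regarded as an algebraic structure in the language $\mathcal{L}=\{\cdot,{}^{-1}\}\cup\{s\mid s\in S\}$. Suppose $S$ contains two idempotents $e,f$ that are incomparable with respect to the natural order on idempotents (i.e. $ef\neq e$ and $fe\neq f$). Then $S$ is not an equational domain in the language $\mathcal{L}$.
   Context: A semigroup $S$ is inverse if for every $s\in S$ there is a unique $s^{-1}\in S$ with $ss^{-1}s=s$ and $s^{-1}ss^{-1}=s^{-1}$; its idempotents commute. The natural order on idempotents is $e\le f \iff ef=e$. The language $\mathcal{L}$ consists of multiplication, inversion, and a constant symbol for every element of $S$. For variables $x_1,\dots,x_n$, a term of $\mathcal{L}$ is a finite product of variables raised to integer powers and constants from $S$. An equation is an equality of two terms; a system of equations is an arbitrary set of equations in $x_1,\dots,x_n$. A set $Y\subseteq S^n$ is algebraic over $S$ if it is the set of all tuples in $S^n$ satisfying all equations of some system. $S$ is an equational domain (in $\mathcal{L}$) if for every $n$, every finite union of algebraic subsets of $S^n$ is algebraic. *)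

theory Defs
  imports Main
begin

definition inverse_semigroup :: "('a \<Rightarrow> 'a \<Rightarrow> 'a) \<Rightarrow> bool" where
  "inverse_semigroup mul \<longleftrightarrow>
     (\<forall>x y z. mul (mul x y) z = mul x (mul y z)) \<and>
     (\<forall>s. \<exists>!t. mul (mul s t) s = s \<and> mul (mul t s) t = t)"

definition sg_inv :: "('a \<Rightarrow> 'a \<Rightarrow> 'a) \<Rightarrow> 'a \<Rightarrow> 'a" where
  "sg_inv mul s = (THE t. mul (mul s t) s = s \<and> mul (mul t s) t = t)"

datatype 'a trm = Var nat | Const 'a | Mul "'a trm" "'a trm" | Inv "'a trm"

fun trm_vars :: "'a trm \<Rightarrow> nat set" where
  "trm_vars (Var i) = {i}"
| "trm_vars (Const c) = {}"
| "trm_vars (Mul t u) = trm_vars t \<union> trm_vars u"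
| "trm_vars (Inv t) = trm_vars t"

text \<open>Evaluation at a point (x_1,...,x_n) given as a list; variable Var i denotes x_(i+1).\<close>
fun trm_eval :: "('a \<Rightarrow> 'a \<Rightarrow> 'a) \<Rightarrow> 'a list \<Rightarrow> 'a trm \<Rightarrow> 'a" where
  "trm_eval mul xs (Var i) = xs ! i"
| "trm_eval mul xs (Const c) = c"
| "trm_eval mul xs (Mul t u) = mul (trm_eval mul xs t) (trm_eval mul xs u)"
| "trm_eval mul xs (Inv t) = sg_inv mul (trm_eval mul xs t)"

definition algebraic :: "('a \<Rightarrow> 'a \<Rightarrow> 'a) \<Rightarrow> nat \<Rightarrow> 'a list set \<Rightarrow> bool" where
  "algebraic mul n Y \<longleftrightarrow>
     (\<exists>E :: ('a trm \<times> 'a trm) set.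
        (\<forall>(t, u) \<in> E. trm_vars t \<subseteq> {..<n} \<and> trm_vars u \<subseteq> {..<n}) \<and>
        Y = {xs. length xs = n \<and> (\<forall>(t, u) \<in> E. trm_eval mul xs t = trm_eval mul xs u)})"

definition equational_domain :: "('a \<Rightarrow> 'a \<Rightarrow> 'a) \<Rightarrow> bool" where
  "equational_domain mul \<longleftrightarrow>
     (\<forall>n (Ys :: 'a list set set). finite Ys \<and> Ys \<noteq> {} \<and> (\<forall>Y \<in> Ys. algebraic mul n Y)
        \<longrightarrow> algebraic mul n (\<Union>Ys))"

end

theory Submission
  imports Defs
begin

text \<open>Call elements a, b compatible if a\<inverse>b and ab\<inverse> are idempotent, and put
  a \<sqinter> b = ab\<inverse>b (their meet in the natural partial order).  Compatibility is
  preserved by products and inverses, and \<sqinter> commutes with both.  Two idempotents are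
  compatible with e \<sqinter> f = ef, so by induction on terms t(ef) = t(e) \<sqinter> t(f) for every
  one-variable term t.  Hence every equation satisfied by e and by f is satisfied by ef,
  and {e, f} is not algebraic unless ef \<in> {e, f}.  But {e} and {f} are algebraic, and
  since idempotents commute, ef \<in> {e, f} means that e and f are comparable.\<close>

locale inverse_semigroup_mul =
  fixes mul :: "'a \<Rightarrow> 'a \<Rightarrow> 'a" (infixl "\<cdot>" 70)
  assumes inverse_semigroup: "inverse_semigroup mul"
begin

abbreviation iv :: "'a \<Rightarrow> 'a" where "iv \<equiv> sg_inv mul"

lemma mul_assoc [simp]: "x \<cdot> y \<cdot> z = x \<cdot> (y \<cdot> z)"
  using inverse_semigroup unfolding inverse_semigroup_def by blast

lemma ex1_sg_inv: "\<exists>!t. s \<cdot> t \<cdot> s = s \<and> t \<cdot> s \<cdot> t = t"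
  using inverse_semigroup unfolding inverse_semigroup_def by blast

lemma sg_inv_regular: "s \<cdot> iv s \<cdot> s = s \<and> iv s \<cdot> s \<cdot> iv s = iv s"
  unfolding sg_inv_def by (rule theI'[OF ex1_sg_inv])

lemma sg_inv_unique: "s \<cdot> (t \<cdot> s) = s \<Longrightarrow> t \<cdot> (s \<cdot> t) = t \<Longrightarrow> t = iv s"
  using ex1_sg_inv[of s] sg_inv_regular[of s] by auto

lemma mul_sg_inv_mul [simp]: "s \<cdot> (iv s \<cdot> s) = s"
  and sg_inv_mul_sg_inv [simp]: "iv s \<cdot> (s \<cdot> iv s) = iv s"
  using sg_inv_regular by simp_all

lemma mul_sg_inv_mul_left [simp]: "s \<cdot> (iv s \<cdot> (s \<cdot> x)) = s \<cdot> x"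
  and sg_inv_mul_sg_inv_left [simp]: "iv s \<cdot> (s \<cdot> (iv s \<cdot> x)) = iv s \<cdot> x"
  by (metis mul_assoc mul_sg_inv_mul sg_inv_mul_sg_inv)+

lemma sg_inv_sg_inv [simp]: "iv (iv s) = s"
  by (rule sg_inv_unique[symmetric]) simp_all

definition idempotent :: "'a \<Rightarrow> bool" where
  "idempotent g \<longleftrightarrow> g \<cdot> g = g"

lemma idempotent_sg_inv:
  assumes "idempotent g"
  shows "iv g = g"
proof -
  have "g \<cdot> (g \<cdot> g) = g"
    using assms unfolding idempotent_def by simp
  from sg_inv_unique[OF this this] show ?thesis
    by (rule sym)
qed

lemma idempotent_mul_sg_inv: "idempotent (s \<cdot> iv s)"
  and idempotent_sg_inv_mul: "idempotent (iv s \<cdot> s)"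
  unfolding idempotent_def by simp_all

lemma sg_inv_mul_idempotents_sandwich:
  assumes "idempotent e" "idempotent f"
  shows "f \<cdot> iv (e \<cdot> f) \<cdot> e = iv (e \<cdot> f)"
proof -
  have e: "e \<cdot> (e \<cdot> y) = e \<cdot> y" and f: "f \<cdot> (f \<cdot> y) = f \<cdot> y" for y
    using assms unfolding idempotent_def by (metis mul_assoc)+
  let ?x = "iv (e \<cdot> f)"
  have r1: "e \<cdot> (f \<cdot> (?x \<cdot> (e \<cdot> f))) = e \<cdot> f"
    using mul_sg_inv_mul[of "e \<cdot> f"] by (simp only: mul_assoc)
  have r2: "?x \<cdot> (e \<cdot> (f \<cdot> (?x \<cdot> y))) = ?x \<cdot> y" for y
    using sg_inv_mul_sg_inv_left[of "e \<cdot> f" y] by (simp only: mul_assoc)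
  have "e \<cdot> f \<cdot> (f \<cdot> ?x \<cdot> e) \<cdot> (e \<cdot> f) = e \<cdot> f"
    by (simp add: e f r1)
  moreover have "f \<cdot> ?x \<cdot> e \<cdot> (e \<cdot> f) \<cdot> (f \<cdot> ?x \<cdot> e) = f \<cdot> ?x \<cdot> e"
    by (simp add: e f r2)
  ultimately show ?thesis
    using sg_inv_unique[of "e \<cdot> f" "f \<cdot> ?x \<cdot> e"] by (simp only: mul_assoc)
qed

lemma idempotent_mul:
  assumes "idempotent e" "idempotent f"
  shows "idempotent (e \<cdot> f)"
proof -
  let ?x = "iv (e \<cdot> f)"
  have x: "f \<cdot> ?x \<cdot> e = ?x"
    using sg_inv_mul_idempotents_sandwich[OF assms] .
  have r2: "?x \<cdot> (e \<cdot> (f \<cdot> ?x)) = ?x"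
    using sg_inv_mul_sg_inv[of "e \<cdot> f"] by (simp only: mul_assoc)
  have "?x \<cdot> ?x = f \<cdot> ?x \<cdot> e \<cdot> (f \<cdot> ?x \<cdot> e)"
    by (simp only: x)
  also have "\<dots> = f \<cdot> (?x \<cdot> (e \<cdot> (f \<cdot> ?x))) \<cdot> e"
    by simp
  also have "\<dots> = ?x"
    by (simp only: r2 x)
  finally have "idempotent ?x"
    unfolding idempotent_def .
  then have "iv ?x = ?x"
    by (rule idempotent_sg_inv)
  then have "e \<cdot> f = ?x"
    by simp
  with \<open>idempotent ?x\<close> show ?thesis
    by simp
qed

lemma idempotents_commute:
  assumes "idempotent e" "idempotent f"
  shows "e \<cdot> f = f \<cdot> e"
proof -
  have "e \<cdot> f = iv (e \<cdot> f)"
    using idempotent_sg_inv[OF idempotent_mul[OF assms]] by simp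
  also have "\<dots> = f \<cdot> (e \<cdot> f) \<cdot> e"
    using sg_inv_mul_idempotents_sandwich[OF assms]
      idempotent_sg_inv[OF idempotent_mul[OF assms]] by simp
  also have "\<dots> = (f \<cdot> e) \<cdot> (f \<cdot> e)"
    by simp
  also have "\<dots> = f \<cdot> e"
    using idempotent_mul[OF assms(2,1)] unfolding idempotent_def .
  finally show ?thesis .
qed

lemma sg_inv_mul: "iv (s \<cdot> t) = iv t \<cdot> iv s"
proof (rule sg_inv_unique[symmetric])
  have c: "t \<cdot> iv t \<cdot> (iv s \<cdot> s) = iv s \<cdot> s \<cdot> (t \<cdot> iv t)"
    using idempotents_commute idempotent_mul_sg_inv idempotent_sg_inv_mul by blast
  have "s \<cdot> t \<cdot> (iv t \<cdot> iv s \<cdot> (s \<cdot> t)) = s \<cdot> (t \<cdot> iv t \<cdot> (iv s \<cdot> s)) \<cdot> t"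
    by simp
  also have "\<dots> = s \<cdot> t"
    by (simp only: c) simp
  finally show "s \<cdot> t \<cdot> (iv t \<cdot> iv s \<cdot> (s \<cdot> t)) = s \<cdot> t" .
  have "iv t \<cdot> iv s \<cdot> (s \<cdot> t \<cdot> (iv t \<cdot> iv s)) = iv t \<cdot> (iv s \<cdot> s \<cdot> (t \<cdot> iv t)) \<cdot> iv s"
    by simp
  also have "\<dots> = iv t \<cdot> iv s"
    by (simp only: c[symmetric]) simp
  finally show "iv t \<cdot> iv s \<cdot> (s \<cdot> t \<cdot> (iv t \<cdot> iv s)) = iv t \<cdot> iv s" .
qed

lemma idempotent_conj:
  assumes "idempotent g"
  shows "idempotent (iv s \<cdot> g \<cdot> s)"
proof -
  have "iv s \<cdot> g \<cdot> s \<cdot> (iv s \<cdot> g \<cdot> s) = iv s \<cdot> (g \<cdot> (s \<cdot> iv s) \<cdot> g) \<cdot> s"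
    by simp
  also have "\<dots> = iv s \<cdot> (s \<cdot> iv s \<cdot> (g \<cdot> g)) \<cdot> s"
    using idempotents_commute[OF assms idempotent_mul_sg_inv] by (metis mul_assoc)
  also have "\<dots> = iv s \<cdot> g \<cdot> s"
    using assms unfolding idempotent_def by simp
  finally show ?thesis
    unfolding idempotent_def .
qed

lemma idempotent_mul_eq_mul_conj:
  assumes "idempotent g"
  shows "g \<cdot> s = s \<cdot> (iv s \<cdot> g \<cdot> s)"
proof -
  have "s \<cdot> (iv s \<cdot> g \<cdot> s) = s \<cdot> iv s \<cdot> g \<cdot> s"
    by simp
  also have "\<dots> = g \<cdot> (s \<cdot> iv s) \<cdot> s"
    using idempotents_commute[OF assms idempotent_mul_sg_inv] by simp
  finally show ?thesis
    by simp
qed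

lemma mul_idempotent_eq_conj_mul:
  assumes "idempotent g"
  shows "s \<cdot> g = (s \<cdot> g \<cdot> iv s) \<cdot> s"
proof -
  have "(s \<cdot> g \<cdot> iv s) \<cdot> s = s \<cdot> (g \<cdot> (iv s \<cdot> s))"
    by simp
  also have "\<dots> = s \<cdot> (iv s \<cdot> s \<cdot> g)"
    using idempotents_commute[OF assms idempotent_sg_inv_mul] by simp
  finally show ?thesis
    by simp
qed

definition compatible :: "'a \<Rightarrow> 'a \<Rightarrow> bool" where
  "compatible a b \<longleftrightarrow> idempotent (iv a \<cdot> b) \<and> idempotent (a \<cdot> iv b)"

definition meet :: "'a \<Rightarrow> 'a \<Rightarrow> 'a" where
  "meet a b = a \<cdot> iv b \<cdot> b"

lemma compatible_refl: "compatible c c"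
  unfolding compatible_def using idempotent_mul_sg_inv idempotent_sg_inv_mul by simp

lemma meet_refl: "meet c c = c"
  unfolding meet_def by simp

lemma compatible_idempotents:
  assumes "idempotent e" "idempotent f"
  shows "compatible e f"
  unfolding compatible_def using assms idempotent_sg_inv idempotent_mul by simp

lemma meet_idempotents:
  assumes "idempotent e" "idempotent f"
  shows "meet e f = e \<cdot> f"
  using assms idempotent_sg_inv unfolding meet_def idempotent_def by simp

lemma compatible_sg_inv: "compatible a b \<Longrightarrow> compatible (iv a) (iv b)"
  unfolding compatible_def by simp

lemma compatible_mul:
  assumes "compatible a1 b1" "compatible a2 b2"
  shows "compatible (a1 \<cdot> a2) (b1 \<cdot> b2)"
proof -
  have g: "idempotent (iv a1 \<cdot> b1)" and h: "idempotent (iv a2 \<cdot> b2)"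
    and p: "idempotent (a2 \<cdot> iv b2)" and q: "idempotent (a1 \<cdot> iv b1)"
    using assms unfolding compatible_def by auto
  have "iv (a1 \<cdot> a2) \<cdot> (b1 \<cdot> b2) = iv a2 \<cdot> (iv a1 \<cdot> b1 \<cdot> b2)"
    by (simp add: sg_inv_mul)
  also have "\<dots> = (iv a2 \<cdot> b2) \<cdot> (iv b2 \<cdot> (iv a1 \<cdot> b1) \<cdot> b2)"
    using idempotent_mul_eq_mul_conj[OF g] by simp
  finally have left: "idempotent (iv (a1 \<cdot> a2) \<cdot> (b1 \<cdot> b2))"
    using idempotent_mul[OF h idempotent_conj[OF g]] by simp
  have "(a1 \<cdot> a2) \<cdot> iv (b1 \<cdot> b2) = a1 \<cdot> (a2 \<cdot> iv b2) \<cdot> iv b1"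
    by (simp add: sg_inv_mul)
  also have "\<dots> = (iv (iv a1) \<cdot> (a2 \<cdot> iv b2) \<cdot> iv a1) \<cdot> (a1 \<cdot> iv b1)"
    using mul_idempotent_eq_conj_mul[OF p, of a1] by simp
  finally have right: "idempotent ((a1 \<cdot> a2) \<cdot> iv (b1 \<cdot> b2))"
    using idempotent_mul[OF idempotent_conj[OF p, of "iv a1"] q] by simp
  from left right show ?thesis
    unfolding compatible_def ..
qed

lemma meet_mul:
  assumes "compatible a2 b2"
  shows "meet (a1 \<cdot> a2) (b1 \<cdot> b2) = meet a1 b1 \<cdot> meet a2 b2"
proof -
  have p: "idempotent (a2 \<cdot> iv b2)"
    using assms unfolding compatible_def by auto
  have "meet (a1 \<cdot> a2) (b1 \<cdot> b2) = a1 \<cdot> ((a2 \<cdot> iv b2) \<cdot> (iv b1 \<cdot> b1)) \<cdot> b2"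
    unfolding meet_def by (simp add: sg_inv_mul)
  also have "\<dots> = a1 \<cdot> ((iv b1 \<cdot> b1) \<cdot> (a2 \<cdot> iv b2)) \<cdot> b2"
    using idempotents_commute[OF p idempotent_sg_inv_mul] by simp
  also have "\<dots> = meet a1 b1 \<cdot> meet a2 b2"
    unfolding meet_def by simp
  finally show ?thesis .
qed

lemma meet_sg_inv:
  assumes "compatible a b"
  shows "meet (iv a) (iv b) = iv (meet a b)"
proof -
  have q: "iv a \<cdot> b = iv b \<cdot> a" and p: "a \<cdot> iv b = b \<cdot> iv a"
    using assms idempotent_sg_inv unfolding compatible_def by (metis sg_inv_mul sg_inv_sg_inv)+
  have "meet (iv a) (iv b) = (iv a \<cdot> b) \<cdot> iv b"
    unfolding meet_def by simp
  also have "\<dots> = iv b \<cdot> (b \<cdot> iv a)"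
    by (simp add: q p[symmetric])
  also have "\<dots> = iv (meet a b)"
    unfolding meet_def by (simp add: sg_inv_mul)
  finally show ?thesis .
qed

lemma trm_eval_idempotents_mul:
  assumes "idempotent e" "idempotent f" "trm_vars t \<subseteq> {0}"
  shows "compatible (trm_eval mul [e] t) (trm_eval mul [f] t) \<and>
         trm_eval mul [e \<cdot> f] t = meet (trm_eval mul [e] t) (trm_eval mul [f] t)"
  using assms(3)
proof (induction t)
  case (Var i)
  then show ?case
    using compatible_idempotents[OF assms(1,2)] meet_idempotents[OF assms(1,2)] by simp
next
  case (Const c)
  then show ?case
    using compatible_refl meet_refl by simp
next
  case (Mul t u)
  then show ?case
    using compatible_mul meet_mul by simp
next
  case (Inv t)
  then show ?case
    using compatible_sg_inv meet_sg_inv by simp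
qed

lemma algebraic_idempotents_mul_mem:
  assumes "algebraic mul 1 Y" "idempotent e" "idempotent f" "[e] \<in> Y" "[f] \<in> Y"
  shows "[e \<cdot> f] \<in> Y"
proof -
  obtain E :: "('a trm \<times> 'a trm) set" where
    vars: "\<forall>(t, u) \<in> E. trm_vars t \<subseteq> {..<1} \<and> trm_vars u \<subseteq> {..<1}" and
    Y: "Y = {xs. length xs = 1 \<and> (\<forall>(t, u) \<in> E. trm_eval mul xs t = trm_eval mul xs u)}"
    using assms(1) unfolding algebraic_def by auto
  have "trm_eval mul [e \<cdot> f] t = trm_eval mul [e \<cdot> f] u" if "(t, u) \<in> E" for t u
  proof -
    have "trm_vars t \<subseteq> {0}" "trm_vars u \<subseteq> {0}"
      using vars that by auto
    moreover have "trm_eval mul [e] t = trm_eval mul [e] u" "trm_eval mul [f] t = trm_eval mul [f] u"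
      using assms(4,5) Y that by auto
    ultimately show ?thesis
      using trm_eval_idempotents_mul[OF assms(2,3)] by metis
  qed
  then show ?thesis
    using Y by auto
qed

end

lemma algebraic_singleton:
  assumes "length xs = n"
  shows "algebraic mul n {xs}"
  unfolding algebraic_def
proof (intro exI conjI)
  let ?E = "(\<lambda>i. (Var i, Const (xs ! i))) ` {..<n}"
  show "\<forall>(t, u) \<in> ?E. trm_vars t \<subseteq> {..<n} \<and> trm_vars u \<subseteq> {..<n}"
    by auto
  show "{xs} = {ys. length ys = n \<and> (\<forall>(t, u) \<in> ?E. trm_eval mul ys t = trm_eval mul ys u)}"
    using assms by (auto intro: nth_equalityI)
qed

lemma equational_domain_algebraic_Un:
  assumes "equational_domain mul" "algebraic mul n Y" "algebraic mul n Z"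
  shows "algebraic mul n (Y \<union> Z)"
  using assms unfolding equational_domain_def
  by (metis (no_types, lifting) Sup_insert ccpo_Sup_singleton empty_not_insert
      finite.emptyI finite.insertI insert_iff singletonD)

theorem lemma3:
  fixes mul :: "'a \<Rightarrow> 'a \<Rightarrow> 'a" and e f :: 'a
  assumes "inverse_semigroup mul"
    and "mul e e = e" and "mul f f = f"
    and "mul e f \<noteq> e" and "mul f e \<noteq> f"
  shows "\<not> equational_domain mul"
proof
  assume "equational_domain mul"
  interpret inverse_semigroup_mul mul
    using assms(1) by unfold_locales
  have e: "idempotent e" and f: "idempotent f"
    using assms(2,3) unfolding idempotent_def by auto
  have "algebraic mul 1 ({[e]} \<union> {[f]})"
    by (intro equational_domain_algebraic_Un[OF \<open>equational_domain mul\<close>] algebraic_singleton)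
      simp_all
  then have "[mul e f] \<in> {[e]} \<union> {[f]}"
    by (rule algebraic_idempotents_mul_mem[OF _ e f]) simp_all
  then show False
    using assms(4,5) idempotents_commute[OF e f] by auto
qed

end
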